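(* Let $t,\ell,m$ be integers with $1 \le t < \ell \le m$. Then $\hat{w}_1(t;\ell,m)<\hat{w}_r(t;\ell,m)$ for every $2\le r\le \ell$. Moreover, the code $\widehat{C}_{\det}(t;\ell,m)$ has exactly $\mu_1(\ell,m)$ codewords of minimum weight, these codewords generate the code, and every codeword of $\widehat{C}_{\det}(t;\ell,m)$ is a sum of at most $\ell$ codewords of minimum weight.
   Context: $q$ is a prime power; $\mu_t(a,b)$ is the number of $a\times b$ matrices over $\mathbb{F}_q$ of rank exactly $t$. For an $\ell\times m$ matrix $M=(m_{ij})$, $\tau_r(M)=m_{11}+\cdots+m_{rr}$. $\hat{w}_r(t;\ell,m)$ is $\frac{1}{q-1}$ times the number of $\ell\times m$ matrices $M$ over $\mathbb{F}_q$ with $1\le\mathrm{rk}(M)\le t$ and $\tau_r(M)\ne 0$. Let $\widehat{\mathcal D}_t(\ell,m)\subset\mathbb{P}^{\ell m-1}(\mathbb{F}_q)=\mathbb{P}(\mathrm{Mat}_{\ell\times m}(\mathbb{F}_q))$ be the set of points $[M]$ with $M\ne 0$ and $\mathrm{rk}(M)\le t$; let $\hat n=|\widehat{\mathcal D}_t(\ell,m)|$, enumerate its points and choose representatives $M_1,\dots,M_{\hat n}$. The determinantal code $\widehat{C}_{\det}(t;\ell,m)\subseteq\mathbb{F}_q^{\hat n}$ is the set of vectors $(f(M_1),\dots,f(M_{\hat n}))$ for $f=\sum_{i,j}f_{ij}X_{ij}$ ranging over linear forms in the entries of an $\ell\times m$ matrix of indeterminates. *)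

theory Defs
  imports "Jordan_Normal_Form.DL_Rank"
begin

definition mrank :: "'a::field mat \<Rightarrow> nat" where
  "mrank A = vec_space.rank (dim_row A) A"

definition mu :: "'a::{finite,field} itself \<Rightarrow> nat \<Rightarrow> nat \<Rightarrow> nat \<Rightarrow> nat" where
  "mu _ t a b = card {M :: 'a mat. M \<in> carrier_mat a b \<and> mrank M = t}"

text \<open>tau_r(M) = m_11 + ... + m_rr (0-based indices here).\<close>
definition tau :: "nat \<Rightarrow> 'a::field mat \<Rightarrow> 'a" where
  "tau r M = (\<Sum>i<r. M $$ (i, i))"

definition what :: "'a::{finite,field} itself \<Rightarrow> nat \<Rightarrow> nat \<Rightarrow> nat \<Rightarrow> nat \<Rightarrow> real" where
  "what _ r t l m =
     real (card {M :: 'a mat. M \<in> carrier_mat l m \<and> 1 \<le> mrank M \<and> mrank M \<le> t \<and> tau r M \<noteq> 0})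
     / real (card (UNIV :: 'a set) - 1)"

text \<open>Nonzero l x m matrices of rank at most t (affine cone over hat D_t(l,m)).\<close>
definition Dhat :: "'a::{finite,field} itself \<Rightarrow> nat \<Rightarrow> nat \<Rightarrow> nat \<Rightarrow> 'a mat set" where
  "Dhat _ t l m = {M. M \<in> carrier_mat l m \<and> M \<noteq> 0\<^sub>m l m \<and> mrank M \<le> t}"

text \<open>R is a set of representatives of the projective points of hat D_t(l,m).\<close>
definition is_rep_set :: "'a::{finite,field} mat set \<Rightarrow> nat \<Rightarrow> nat \<Rightarrow> nat \<Rightarrow> bool" where
  "is_rep_set R t l m \<longleftrightarrow> R \<subseteq> Dhat TYPE('a) t l m \<and>
     (\<forall>M \<in> Dhat TYPE('a) t l m. \<exists>!N. N \<in> R \<and> (\<exists>c. c \<noteq> 0 \<and> M = c \<cdot>\<^sub>m N))"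

text \<open>Codeword of the linear form with coefficient matrix F, as a function on the
  representative set R (zero outside R).\<close>
definition codeword :: "nat \<Rightarrow> nat \<Rightarrow> 'a::field mat set \<Rightarrow> 'a mat \<Rightarrow> 'a mat \<Rightarrow> 'a" where
  "codeword l m R F = (\<lambda>N. if N \<in> R then (\<Sum>i<l. \<Sum>j<m. F $$ (i, j) * N $$ (i, j)) else 0)"

definition det_code :: "nat \<Rightarrow> nat \<Rightarrow> 'a::field mat set \<Rightarrow> ('a mat \<Rightarrow> 'a) set" where
  "det_code l m R = {codeword l m R F | F. F \<in> carrier_mat l m}"

definition wt :: "'a mat set \<Rightarrow> ('a mat \<Rightarrow> 'b::zero) \<Rightarrow> nat" where
  "wt R c = card {N \<in> R. c N \<noteq> 0}"

definition min_dist :: "'a mat set \<Rightarrow> ('a mat \<Rightarrow> 'b::zero) set \<Rightarrow> nat" where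
  "min_dist R C = Min {wt R c | c. c \<in> C \<and> c \<noteq> (\<lambda>_. 0)}"

definition min_wt_words :: "'a mat set \<Rightarrow> ('a mat \<Rightarrow> 'b::zero) set \<Rightarrow> ('a mat \<Rightarrow> 'b) set" where
  "min_wt_words R C = {c \<in> C. c \<noteq> (\<lambda>_. 0) \<and> wt R c = min_dist R C}"

definition lin_span :: "('b \<Rightarrow> 'a::field) set \<Rightarrow> ('b \<Rightarrow> 'a) set" where
  "lin_span W = {(\<lambda>x. \<Sum>w\<in>S. a w * w x) | S a. finite S \<and> S \<subseteq> W}"

end

theory Submission
  imports Defs "Jordan_Normal_Form.Column_Operations"
begin

text \<open>Write F = P E Q with P, Q invertible and E the standard matrix of rank k = rk F. The
  substitution M \<mapsto> P^T M Q^T permutes the nonzero matrices of rank at most t and turns the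
  linear form of F into tau_k, so the codeword of F has weight hat w_k(t; l, m): weights depend only
  on the rank of the coefficient matrix. The strict inequality hat w_1 < hat w_r comes from an
  injection of {M : m_11 \<noteq> 0 = tau_r(M)} into {M : m_11 = 0 \<noteq> tau_r(M)} that clears the corner
  entry and misses one explicit matrix. Hence the minimum weight codewords are exactly those of the
  rank one matrices, which span the code, and a rank factorisation writes any codeword as a sum of
  at most l of them.\<close>

section \<open>Rank of matrices\<close>

lemma (in vec_space) maximal_indpt_cols_exists:
  assumes "A \<in> carrier_mat n nc"
  obtains S where "maximal S (\<lambda>T. T \<subseteq> set (cols A) \<and> lin_indpt T)" and "rank A = card S"
proof -
  obtain S where "maximal S (\<lambda>T. T \<subseteq> set (cols A) \<and> lin_indpt T)"
    using maximal_exists[of "(\<lambda>T. T \<subseteq> set (cols A) \<and> lin_indpt T)" "card (set (cols A))" "{}"]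
    by (meson List.finite_set card_mono empty_iff empty_subsetI finite_lin_indpt2 rev_finite_subset)
  with rank_card_indpt[OF assms] that show thesis by blast
qed

lemma mrank_le_factor:
  fixes A :: "'a::field mat"
  assumes A: "A \<in> carrier_mat n nc" and U: "U \<in> carrier_mat n k"
    and V: "V \<in> carrier_mat k nc" and AUV: "A = U * V"
  shows "mrank A \<le> k"
proof -
  interpret vec_space "TYPE('a)" n .
  obtain S where maxS: "maximal S (\<lambda>T. T \<subseteq> set (cols A) \<and> lin_indpt T)" and rk: "rank A = card S"
    using maximal_indpt_cols_exists[OF A] .
  have S1: "S \<subseteq> set (cols A)" and S2: "lin_indpt S" using maxS unfolding maximal_def by auto
  have colsU: "set (cols U) \<subseteq> carrier_vec n" using U cols_dim by blast
  have "set (cols A) \<subseteq> span (set (cols U))"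
  proof
    fix c assume "c \<in> set (cols A)"
    then obtain j where j: "j < nc" "c = col A j" using A
      by (metis carrier_matD(2) cols_length cols_nth in_set_conv_nth)
    have "c = U *\<^sub>v col V j" "col V j \<in> carrier_vec k" using j A U V AUV by (auto simp: col_mult2)
    then have "c \<in> col_space U" unfolding col_space_eq[OF U] using U by auto
    then show "c \<in> span (set (cols U))" unfolding col_space_def .
  qed
  then have "S \<subseteq> span (set (cols U))" using S1 by blast
  from replacement[OF finite_subset[OF S1 List.finite_set] List.finite_set colsU S2 this]
  have "card S \<le> card (set (cols U))" by auto
  also have "\<dots> \<le> k" using card_length[of "cols U"] U by simp
  finally show ?thesis using rk A unfolding mrank_def by simp
qed

lemma (in vec_space) cols_subset_span_maximal:
  assumes A: "A \<in> carrier_mat n nc" and maxS: "maximal S (\<lambda>T. T \<subseteq> set (cols A) \<and> lin_indpt T)"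
  shows "set (cols A) \<subseteq> span S"
proof
  fix c assume c: "c \<in> set (cols A)"
  have S: "S \<subseteq> set (cols A)" "lin_indpt S" using maxS unfolding maximal_def by auto
  have colsA: "set (cols A) \<subseteq> carrier_vec n" using A cols_dim by blast
  then have Scar: "S \<subseteq> carrier_vec n" using S(1) by blast
  show "c \<in> span S"
  proof (rule ccontr)
    assume nc: "c \<notin> span S"
    have cS: "c \<notin> S" using nc in_own_span[OF Scar] by blast
    have "lin_indpt (S \<union> {c})" using lin_dep_iff_in_span[OF Scar S(2) _ cS] c colsA nc by auto
    then have "S \<union> {c} \<subseteq> S" using maxS S(1) c unfolding maximal_def by blast
    then show False using cS by blast
  qed
qed

lemma (in vec_space) mult_factor_if_cols_in_col_space:
  assumes A: "A \<in> carrier_mat n nc" and U: "U \<in> carrier_mat n k" and cols: "set (cols A) \<subseteq> col_space U"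
  obtains V where "V \<in> carrier_mat k nc" and "A = U * V"
proof -
  have "\<exists>x. x \<in> carrier_vec k \<and> U *\<^sub>v x = col A j" if j: "j < nc" for j
  proof -
    have "col A j \<in> col_space U" using cols j A by (metis carrier_matD(2) cols_length cols_nth nth_mem subsetD)
    then show ?thesis unfolding col_space_eq[OF U] using U by auto
  qed
  then obtain x where x: "\<And>j. j < nc \<Longrightarrow> x j \<in> carrier_vec k \<and> U *\<^sub>v x j = col A j" by metis
  define V where "V = mat k nc (\<lambda>(a,j). x j $ a)"
  have V: "V \<in> carrier_mat k nc" unfolding V_def by auto
  have colV: "col V j = x j" if j: "j < nc" for j
    unfolding V_def using j x[OF j] by (intro eq_vecI) auto
  have "A = U * V"
  proof (rule eq_matI)
    fix i j assume "i < dim_row (U * V)" and "j < dim_col (U * V)"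
    then have i: "i < n" and j: "j < nc" using U V by auto
    have "(U * V) $$ (i, j) = (U *\<^sub>v col V j) $ i" using i j U V by auto
    also have "\<dots> = A $$ (i,j)" using colV[OF j] x[OF j] A i j by simp
    finally show "A $$ (i, j) = (U * V) $$ (i, j)" by simp
  qed (use A U V in auto)
  then show thesis using that V by blast
qed

lemma mrank_factor:
  fixes A :: "'a::field mat"
  assumes A: "A \<in> carrier_mat n nc"
  obtains U V where "U \<in> carrier_mat n (mrank A)" and "V \<in> carrier_mat (mrank A) nc" and "A = U * V"
proof -
  interpret vec_space "TYPE('a)" n .
  obtain S where maxS: "maximal S (\<lambda>T. T \<subseteq> set (cols A) \<and> lin_indpt T)" and rk: "rank A = card S"
    using maximal_indpt_cols_exists[OF A] .
  have S: "S \<subseteq> set (cols A)" using maxS unfolding maximal_def by auto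
  then obtain xs where xs: "set xs = S" "distinct xs" using finite_distinct_list finite_subset by blast
  have Scar: "S \<subseteq> carrier_vec n" using S A cols_dim by blast
  define U where "U = mat_of_cols n xs"
  have U: "U \<in> carrier_mat n (mrank A)"
    unfolding U_def using xs rk A distinct_card unfolding mrank_def by fastforce
  have "cols U = xs" unfolding U_def using xs Scar by (intro cols_mat_of_cols) auto
  then have "set (cols A) \<subseteq> col_space U"
    using cols_subset_span_maximal[OF A maxS] xs(1) unfolding col_space_def by simp
  then show thesis using mult_factor_if_cols_in_col_space[OF A U] that U by blast
qed

lemma mrank_mult_left:
  fixes A :: "'a::field mat"
  assumes A: "A \<in> carrier_mat n p" and B: "B \<in> carrier_mat p nc"
  shows "mrank (A * B) \<le> mrank A"
proof -
  obtain U V where U: "U \<in> carrier_mat n (mrank A)" and V: "V \<in> carrier_mat (mrank A) p" and "A = U * V"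
    using mrank_factor[OF A] .
  then have "A * B = U * (V * B)" using B by (simp add: assoc_mult_mat)
  then show ?thesis using U V B by (intro mrank_le_factor[of _ n nc U _ "V * B"]) auto
qed

lemma mrank_mult_right:
  fixes A :: "'a::field mat"
  assumes A: "A \<in> carrier_mat n p" and B: "B \<in> carrier_mat p nc"
  shows "mrank (A * B) \<le> mrank B"
proof -
  obtain U V where U: "U \<in> carrier_mat p (mrank B)" and V: "V \<in> carrier_mat (mrank B) nc" and "B = U * V"
    using mrank_factor[OF B] .
  then have "A * B = (A * U) * V" using A by (simp add: assoc_mult_mat)
  then show ?thesis using U V A by (intro mrank_le_factor[of _ n nc "A * U" _ V]) auto
qed

lemma mrank_le_row:
  fixes A :: "'a::field mat"
  assumes "A \<in> carrier_mat n nc"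
  shows "mrank A \<le> n"
  using assms by (intro mrank_le_factor[of A n nc "1\<^sub>m n" n A]) auto

lemma mrank_le_col:
  fixes A :: "'a::field mat"
  assumes "A \<in> carrier_mat n nc"
  shows "mrank A \<le> nc"
  using assms by (intro mrank_le_factor[of A n nc A nc "1\<^sub>m nc"]) auto

lemma mrank_zero_iff:
  fixes A :: "'a::field mat"
  assumes A: "A \<in> carrier_mat n nc"
  shows "mrank A = 0 \<longleftrightarrow> A = 0\<^sub>m n nc"
proof
  assume "mrank A = 0"
  then obtain U V where "U \<in> carrier_mat n 0" and "V \<in> carrier_mat 0 nc" and "A = U * V"
    using mrank_factor[OF A] by metis
  then show "A = 0\<^sub>m n nc" by (intro eq_matI) (auto simp: scalar_prod_def)
qed (simp add: mrank_def vec_space.rank_0I)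

lemma mrank_pos_iff:
  fixes A :: "'a::field mat"
  assumes "A \<in> carrier_mat n nc"
  shows "1 \<le> mrank A \<longleftrightarrow> A \<noteq> 0\<^sub>m n nc"
  using mrank_zero_iff[OF assms] by linarith

lemma mrank_transpose:
  fixes A :: "'a::field mat"
  assumes A: "A \<in> carrier_mat n nc"
  shows "mrank (A\<^sup>T) = mrank A"
proof -
  have le: "mrank (B\<^sup>T) \<le> mrank B" if B: "B \<in> carrier_mat n' nc'" for B :: "'a mat" and n' nc'
  proof -
    obtain U V where U: "U \<in> carrier_mat n' (mrank B)" and V: "V \<in> carrier_mat (mrank B) nc'"
      and "B = U * V" using mrank_factor[OF B] .
    then have "B\<^sup>T = V\<^sup>T * U\<^sup>T" by (simp add: transpose_mult)
    then show ?thesis using U V by (intro mrank_le_factor[of _ nc' n' "V\<^sup>T" _ "U\<^sup>T"]) auto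
  qed
  show ?thesis using le[OF A] le[of "A\<^sup>T" nc n] A by auto
qed

lemma mrank_smult_le:
  fixes A :: "'a::field mat"
  assumes A: "A \<in> carrier_mat n nc"
  shows "mrank (c \<cdot>\<^sub>m A) \<le> mrank A"
proof -
  have "c \<cdot>\<^sub>m A = (c \<cdot>\<^sub>m 1\<^sub>m n) * A" using A by (auto intro!: eq_matI)
  then show ?thesis using mrank_mult_right[of "c \<cdot>\<^sub>m 1\<^sub>m n" n n A nc] A by auto
qed

lemma mrank_outer_prod_le:
  "mrank (mat l m (\<lambda>(i,j). u i * v j) :: 'a::field mat) \<le> 1"
  using vec_space.rank_le_1_product_entries[of "mat l m (\<lambda>(i,j). u i * v j)" l m u v]
  by (simp add: mrank_def)

lemma distinct_cols_if_full_rank: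
  fixes X :: "'a::field mat"
  assumes X: "X \<in> carrier_mat n k" and rk: "mrank X = k"
  shows "distinct (cols X)"
proof -
  interpret vec_space "TYPE('a)" n .
  obtain S where maxS: "maximal S (\<lambda>T. T \<subseteq> set (cols X) \<and> lin_indpt T)" and "rank X = card S"
    using maximal_indpt_cols_exists[OF X] .
  moreover have "card S \<le> card (set (cols X))"
    using maxS by (simp add: card_mono maximal_def)
  ultimately have "length (cols X) \<le> card (set (cols X))" using rk X unfolding mrank_def by simp
  then show ?thesis using card_length[of "cols X"] by (simp add: card_distinct)
qed

lemma mult_vec_eq_zero_full_rank:
  fixes X :: "'a::field mat"
  assumes X: "X \<in> carrier_mat n k" and rk: "mrank X = k"
    and v: "v \<in> carrier_vec k" and Xv: "X *\<^sub>v v = 0\<^sub>v n"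
  shows "v = 0\<^sub>v k"
proof -
  interpret vec_space "TYPE('a)" n .
  have dist: "distinct (cols X)" by (rule distinct_cols_if_full_rank[OF X rk])
  have "rank X = k" using rk X unfolding mrank_def by simp
  from full_rank_lin_indpt[OF X this dist] have "lin_indpt (set (cols X))" .
  then show ?thesis using lin_depI[OF X v _ Xv dist] by blast
qed

lemma mult_unit_vec_col:
  fixes A :: "'a::comm_ring_1 mat"
  assumes A: "A \<in> carrier_mat n k" and i: "i < k"
  shows "A *\<^sub>v unit_vec k i = col A i"
  by (rule eq_vecI) (use A i in \<open>auto simp: scalar_prod_right_unit\<close>)

lemma mrank_eq_if_trivial_kernel:
  fixes X :: "'a::field mat"
  assumes X: "X \<in> carrier_mat n k"
    and ker: "\<And>v. v \<in> carrier_vec k \<Longrightarrow> X *\<^sub>v v = 0\<^sub>v n \<Longrightarrow> v = 0\<^sub>v k"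
  shows "mrank X = k"
proof -
  interpret vec_space "TYPE('a)" n .
  have dist: "distinct (cols X)"
  proof (rule ccontr)
    assume "\<not> distinct (cols X)"
    then obtain i j where ij: "i < k" "j < k" "i \<noteq> j" "col X i = col X j"
      using X by (metis carrier_matD(2) cols_length cols_nth distinct_conv_nth)
    define v :: "'a vec" where "v = unit_vec k i - unit_vec k j"
    have "X *\<^sub>v v = col X i - col X j"
      unfolding v_def using X ij by (simp add: mult_minus_distrib_mat_vec mult_unit_vec_col)
    also have "\<dots> = 0\<^sub>v n" using ij X by auto
    finally have "v = 0\<^sub>v k" using ker unfolding v_def by simp
    moreover have "v $ i = 1" unfolding v_def using ij by simp
    ultimately show False using ij by simp
  qed
  have "lin_indpt (set (cols X))"
  proof
    assume "lin_dep (set (cols X))"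
    from lin_depE[OF X this dist] obtain v where "v \<in> carrier_vec k" "v \<noteq> 0\<^sub>v k" "X *\<^sub>v v = 0\<^sub>v n" .
    then show False using ker by blast
  qed
  then show ?thesis using lin_indpt_full_rank[OF X dist] X unfolding mrank_def by simp
qed

lemma (in vec_space) indpt_extends_to_basis:
  assumes A: "A \<subseteq> carrier_vec n" "lin_indpt A" "finite A"
  obtains C where "finite C" "C \<subseteq> carrier_vec n" "C \<inter> A = {}" "card A + card C = n"
    "lin_indpt (A \<union> C)"
proof -
  have B: "set (unit_vecs n) \<subseteq> carrier_vec n" by (rule unit_vecs_carrier)
  have AB: "A \<subseteq> span (set (unit_vecs n))" using A(1) span_unit_vecs_is_carrier by simp
  obtain C where C: "finite C" "C \<subseteq> carrier_vec n" "C \<inter> A = {}"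
    "int (card C) \<le> int (card (set (unit_vecs n :: 'a vec list))) - int (card A)"
    and gen: "span (A \<union> C) = span (set (unit_vecs n))"
    using replacement[OF A(3) List.finite_set B A(2) AB] by blast
  have cB: "card (set (unit_vecs n :: 'a vec list)) = n"
    using unit_vecs_distinct distinct_card unit_vecs_length by metis
  have gen': "span (A \<union> C) = carrier_vec n" using gen span_unit_vecs_is_carrier by simp
  have finAC: "finite (A \<union> C)" and ACcar: "A \<union> C \<subseteq> carrier_vec n" using A C by auto
  have "n \<le> card (A \<union> C)" using gen_ge_dim[OF finAC] ACcar gen' dim_is_n by simp
  moreover have cAC: "card (A \<union> C) = card A + card C" using A(3) C(1,3) by (simp add: card_Un_disjoint inf_commute)
  ultimately have "card A + card C = n" using C(4) cB by linarith
  moreover have "basis (A \<union> C)"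
    using dim_gen_is_basis[OF finAC] ACcar gen' cAC calculation dim_is_n by simp
  ultimately show thesis using that C unfolding basis_def by blast
qed

lemma full_rank_extension:
  fixes U :: "'a::field mat"
  assumes U: "U \<in> carrier_mat n k" and rk: "mrank U = k"
  obtains P where "P \<in> carrier_mat n n" and "mrank P = n" and "\<And>i j. i < n \<Longrightarrow> j < k \<Longrightarrow> P $$ (i,j) = U $$ (i,j)"
proof -
  interpret vec_space "TYPE('a)" n .
  have dist: "distinct (cols U)" by (rule distinct_cols_if_full_rank[OF U rk])
  have "rank U = k" using rk U unfolding mrank_def by simp
  from full_rank_lin_indpt[OF U this dist] have li: "lin_indpt (set (cols U))" .
  have Ucar: "set (cols U) \<subseteq> carrier_vec n" using U cols_dim by blast
  obtain C where C: "finite C" "C \<subseteq> carrier_vec n" "C \<inter> set (cols U) = {}"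
    "card (set (cols U)) + card C = n" "lin_indpt (set (cols U) \<union> C)"
    using indpt_extends_to_basis[OF Ucar li List.finite_set] .
  obtain cs where cs: "set cs = C" "distinct cs" using finite_distinct_list[OF C(1)] by blast
  define ws where "ws = cols U @ cs"
  have wsd: "distinct ws" unfolding ws_def using dist cs C(3) by auto
  have "length cs = card C" using cs distinct_card by metis
  moreover have "length (cols U) = card (set (cols U))" using dist distinct_card by metis
  ultimately
  have wsl: "length ws = n" unfolding ws_def using C(4) by simp
  have kn: "k \<le> n" using wsl U unfolding ws_def by simp
  define P where "P = mat_of_cols n ws"
  have P: "P \<in> carrier_mat n n" unfolding P_def using wsl by auto
  have colsP: "cols P = ws" unfolding P_def using Ucar C(2) cs by (intro cols_mat_of_cols) (auto simp: ws_def)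
  have "rank P = n"
    using lin_indpt_full_rank[OF P] colsP wsd C(5) cs unfolding ws_def by simp
  then have "mrank P = n" unfolding mrank_def using P by simp
  moreover have "P $$ (i,j) = U $$ (i,j)" if "i < n" "j < k" for i j
    unfolding P_def ws_def using that U kn wsl by (simp add: mat_of_cols_def nth_append ws_def)
  ultimately show thesis using that P by blast
qed

definition rank_std_mat :: "nat \<Rightarrow> nat \<Rightarrow> nat \<Rightarrow> 'a::{zero,one} mat" where
  "rank_std_mat l m k = mat l m (\<lambda>(i,j). if i = j \<and> i < k then 1 else 0)"

lemma rank_std_mat_carrier [simp]: "rank_std_mat l m k \<in> carrier_mat l m"
  unfolding rank_std_mat_def by simp

lemma mult_rank_std_mat_mult_index:
  fixes P :: "'a::comm_ring_1 mat"
  assumes P: "P \<in> carrier_mat l l" and Q: "Q \<in> carrier_mat m m" and k: "k \<le> l" "k \<le> m"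
    and ij: "i < l" "j < m"
  shows "(P * rank_std_mat l m k * Q) $$ (i,j) = (\<Sum>a<k. P $$ (i,a) * Q $$ (a,j))"
proof -
  have PE: "(P * rank_std_mat l m k) $$ (i,a) = (if a < k then P $$ (i,a) else 0)" if "a < m" for a
  proof -
    have "(P * rank_std_mat l m k) $$ (i,a) = (\<Sum>b<l. P $$ (i,b) * (if b = a \<and> b < k then 1 else 0))"
      using P ij that by (simp add: rank_std_mat_def scalar_prod_def atLeast0LessThan)
    also have "\<dots> = (\<Sum>b<l. if b = a then (if a < k then P $$ (i,a) else 0) else 0)"
      by (rule sum.cong) auto
    finally show ?thesis using k by simp
  qed
  have "(P * rank_std_mat l m k * Q) $$ (i,j) = (\<Sum>a<m. (P * rank_std_mat l m k) $$ (i,a) * Q $$ (a,j))"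
    using P Q ij by (auto simp: scalar_prod_def atLeast0LessThan rank_std_mat_def intro!: sum.cong)
  also have "\<dots> = (\<Sum>a<m. if a < k then P $$ (i,a) * Q $$ (a,j) else 0)"
    by (rule sum.cong) (auto simp: PE)
  also have "\<dots> = (\<Sum>a<k. P $$ (i,a) * Q $$ (a,j))"
    using k by (simp add: sum.If_cases lessThan_def Collect_conj_eq Int_absorb1 subset_eq)
  finally show ?thesis .
qed

lemma rank_normal_form:
  fixes F :: "'a::field mat"
  assumes F: "F \<in> carrier_mat l m"
  obtains P Q where "P \<in> carrier_mat l l" "mrank P = l" "Q \<in> carrier_mat m m" "mrank Q = m"
    and "F = P * rank_std_mat l m (mrank F) * Q"
proof -
  define k where "k = mrank F"
  obtain U V where U: "U \<in> carrier_mat l k" and V: "V \<in> carrier_mat k m" and e: "F = U * V"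
    using mrank_factor[OF F] unfolding k_def .
  have rU: "mrank U = k" using mrank_mult_left[OF U V] mrank_le_col[OF U] e k_def by simp
  have rV: "mrank (V\<^sup>T) = k"
    using mrank_mult_right[OF U V] mrank_le_row[OF V] e k_def mrank_transpose[OF V] by simp
  have kl: "k \<le> l" and km: "k \<le> m" using mrank_le_row[OF F] mrank_le_col[OF F] k_def by auto
  obtain P where P: "P \<in> carrier_mat l l" "mrank P = l" and PU: "\<And>i a. i < l \<Longrightarrow> a < k \<Longrightarrow> P $$ (i,a) = U $$ (i,a)"
    using full_rank_extension[OF U rU] by blast
  obtain Q' where Q': "Q' \<in> carrier_mat m m" "mrank Q' = m"
    and QV: "\<And>j a. j < m \<Longrightarrow> a < k \<Longrightarrow> Q' $$ (j,a) = V\<^sup>T $$ (j,a)"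
    using full_rank_extension[OF _ rV] V by auto
  have Q: "Q'\<^sup>T \<in> carrier_mat m m" "mrank (Q'\<^sup>T) = m" using Q' mrank_transpose[OF Q'(1)] by auto
  have "F = P * rank_std_mat l m k * Q'\<^sup>T"
  proof (rule eq_matI)
    fix i j assume "i < dim_row (P * rank_std_mat l m k * Q'\<^sup>T)" "j < dim_col (P * rank_std_mat l m k * Q'\<^sup>T)"
    then have ij: "i < l" "j < m" using P Q by auto
    have "(P * rank_std_mat l m k * Q'\<^sup>T) $$ (i,j) = (\<Sum>a<k. U $$ (i,a) * V $$ (a,j))"
      using mult_rank_std_mat_mult_index[OF P(1) Q(1) kl km ij] PU QV ij Q' V km
      by (auto intro!: sum.cong)
    also have "\<dots> = F $$ (i,j)" using e U V ij by (simp add: scalar_prod_def atLeast0LessThan)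
    finally show "F $$ (i,j) = (P * rank_std_mat l m k * Q'\<^sup>T) $$ (i,j)" by simp
  qed (use F P Q in auto)
  then show thesis using that P Q unfolding k_def by blast
qed

lemma full_rank_cancel_left:
  fixes A :: "'a::field mat"
  assumes A: "A \<in> carrier_mat n k" and rk: "mrank A = k"
    and B1: "B1 \<in> carrier_mat k p" and B2: "B2 \<in> carrier_mat k p" and e: "A * B1 = A * B2"
  shows "B1 = B2"
proof (rule eq_matI)
  fix i j assume i: "i < dim_row B2" and j: "j < dim_col B2"
  have jp: "j < p" using j B2 by simp
  have "A *\<^sub>v (col B1 j - col B2 j) = A *\<^sub>v col B1 j - A *\<^sub>v col B2 j"
    using A B1 B2 jp by (intro mult_minus_distrib_mat_vec) auto
  also have "\<dots> = col (A * B1) j - col (A * B2) j"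
    by (simp only: col_mult2[OF A B1 jp] col_mult2[OF A B2 jp])
  also have "\<dots> = 0\<^sub>v n" using e A B2 j by auto
  finally have "col B1 j - col B2 j = 0\<^sub>v k"
    using mult_vec_eq_zero_full_rank[OF A rk] B1 B2 j by simp
  then have "(col B1 j - col B2 j) $ i = 0" using i B2 by simp
  then show "B1 $$ (i,j) = B2 $$ (i,j)" using i j B1 B2 by simp
qed (use B1 B2 in auto)

section \<open>Weights of codewords\<close>

definition frob_inner :: "nat \<Rightarrow> nat \<Rightarrow> 'a::comm_ring_1 mat \<Rightarrow> 'a mat \<Rightarrow> 'a" where
  "frob_inner l m F M = (\<Sum>i<l. \<Sum>j<m. F $$ (i, j) * M $$ (i, j))"

lemma codeword_eq: "codeword l m R F N = (if N \<in> R then frob_inner l m F N else 0)"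
  unfolding codeword_def frob_inner_def by simp

lemma frob_inner_mult_left:
  fixes P :: "'a::comm_ring_1 mat"
  assumes P: "P \<in> carrier_mat l l" and G: "G \<in> carrier_mat l m" and M: "M \<in> carrier_mat l m"
  shows "frob_inner l m (P * G) M = frob_inner l m G (P\<^sup>T * M)"
proof -
  have "frob_inner l m (P * G) M = (\<Sum>i<l. \<Sum>j<m. \<Sum>a<l. P $$ (i,a) * G $$ (a,j) * M $$ (i,j))"
    unfolding frob_inner_def using P G M
    by (intro sum.cong refl) (auto simp: scalar_prod_def atLeast0LessThan sum_distrib_right)
  also have "\<dots> = (\<Sum>i<l. \<Sum>a<l. \<Sum>j<m. P $$ (i,a) * G $$ (a,j) * M $$ (i,j))"
    by (rule sum.cong[OF refl], rule sum.swap)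
  also have "\<dots> = (\<Sum>a<l. \<Sum>i<l. \<Sum>j<m. P $$ (i,a) * G $$ (a,j) * M $$ (i,j))"
    by (rule sum.swap)
  also have "\<dots> = (\<Sum>a<l. \<Sum>j<m. \<Sum>i<l. P $$ (i,a) * G $$ (a,j) * M $$ (i,j))"
    by (rule sum.cong[OF refl], rule sum.swap)
  also have "\<dots> = frob_inner l m G (P\<^sup>T * M)"
    unfolding frob_inner_def using P G M
    by (intro sum.cong refl) (auto simp: scalar_prod_def atLeast0LessThan sum_distrib_left ac_simps)
  finally show ?thesis .
qed

lemma frob_inner_mult_right:
  fixes Q :: "'a::comm_ring_1 mat"
  assumes Q: "Q \<in> carrier_mat m m" and G: "G \<in> carrier_mat l m" and M: "M \<in> carrier_mat l m"
  shows "frob_inner l m (G * Q) M = frob_inner l m G (M * Q\<^sup>T)"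
proof -
  have "frob_inner l m (G * Q) M = (\<Sum>i<l. \<Sum>j<m. \<Sum>b<m. G $$ (i,b) * Q $$ (b,j) * M $$ (i,j))"
    unfolding frob_inner_def using Q G M
    by (intro sum.cong refl) (auto simp: scalar_prod_def atLeast0LessThan sum_distrib_right)
  also have "\<dots> = (\<Sum>i<l. \<Sum>b<m. \<Sum>j<m. G $$ (i,b) * Q $$ (b,j) * M $$ (i,j))"
    by (rule sum.cong[OF refl], rule sum.swap)
  also have "\<dots> = frob_inner l m G (M * Q\<^sup>T)"
    unfolding frob_inner_def using Q G M
    by (intro sum.cong refl) (auto simp: scalar_prod_def atLeast0LessThan sum_distrib_left ac_simps)
  finally show ?thesis .
qed

lemma frob_inner_rank_std_mat:
  fixes M :: "'a::field mat"
  assumes "k \<le> l" "k \<le> m"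
  shows "frob_inner l m (rank_std_mat l m k) M = tau k M"
proof -
  have "frob_inner l m (rank_std_mat l m k) M
      = (\<Sum>i<l. \<Sum>j<m. if j = i then (if i < k then M $$ (i,i) else 0) else 0)"
    unfolding frob_inner_def rank_std_mat_def by (intro sum.cong refl) auto
  also have "\<dots> = (\<Sum>i<l. if i < k then M $$ (i,i) else 0)"
    using assms by (intro sum.cong refl) (auto simp: sum.delta)
  also have "\<dots> = tau k M"
    unfolding tau_def using assms by (simp add: sum.If_cases lessThan_def Collect_conj_eq Int_absorb1 subset_eq)
  finally show ?thesis .
qed

lemma frob_inner_smult:
  fixes M :: "'a::comm_ring_1 mat"
  assumes "M \<in> carrier_mat l m"
  shows "frob_inner l m F (c \<cdot>\<^sub>m M) = c * frob_inner l m F M"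
  unfolding frob_inner_def using assms by (simp add: sum_distrib_left mult.left_commute)

lemma finite_carrier_mat: "finite (carrier_mat l m :: 'a::finite mat set)"
proof -
  have "carrier_mat l m \<subseteq> (\<lambda>f. mat l m f) ` ({..<l} \<times> {..<m} \<rightarrow>\<^sub>E (UNIV :: 'a set))"
  proof
    fix M :: "'a mat" assume M: "M \<in> carrier_mat l m"
    let ?f = "restrict (\<lambda>ij. M $$ ij) ({..<l} \<times> {..<m})"
    have "M = mat l m ?f" using M by (auto intro!: eq_matI)
    moreover have "?f \<in> {..<l} \<times> {..<m} \<rightarrow>\<^sub>E UNIV" by auto
    ultimately show "M \<in> (\<lambda>f. mat l m f) ` ({..<l} \<times> {..<m} \<rightarrow>\<^sub>E UNIV)" by blast
  qed
  moreover have "finite ({..<l} \<times> {..<m} \<rightarrow>\<^sub>E (UNIV :: 'a set))" by (intro finite_PiE) auto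
  ultimately show ?thesis by (meson finite_imageI finite_subset)
qed

lemma finite_Dhat: "finite (Dhat TYPE('a::{finite,field}) t l m)"
  unfolding Dhat_def by (rule finite_subset[OF _ finite_carrier_mat]) auto

lemma mem_Dhat_iff:
  "M \<in> Dhat TYPE('a::{finite,field}) t l m \<longleftrightarrow> M \<in> carrier_mat l m \<and> 1 \<le> mrank M \<and> mrank M \<le> t"
  unfolding Dhat_def using mrank_pos_iff[of M l m] by auto

lemma bij_betw_equiv_Dhat:
  fixes P :: "'a::{finite,field} mat"
  assumes P: "P \<in> carrier_mat l l" "mrank P = l" and Q: "Q \<in> carrier_mat m m" "mrank Q = m"
  shows "bij_betw (\<lambda>M. P * M * Q) (Dhat TYPE('a) t l m) (Dhat TYPE('a) t l m)"
proof -
  let ?D = "Dhat TYPE('a) t l m" and ?psi = "\<lambda>M. P * M * Q"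
  have inj: "M1 = M2" if "M1 \<in> carrier_mat l m" "M2 \<in> carrier_mat l m" "?psi M1 = ?psi M2" for M1 M2
  proof -
    have "P * (M1 * Q) = P * (M2 * Q)" using that P Q by (simp add: assoc_mult_mat)
    then have "M1 * Q = M2 * Q" using full_rank_cancel_left[OF P, of "M1 * Q" m "M2 * Q"] that Q by auto
    then have "(M1 * Q)\<^sup>T = (M2 * Q)\<^sup>T" by simp
    then have "Q\<^sup>T * M1\<^sup>T = Q\<^sup>T * M2\<^sup>T" using that Q by (simp add: transpose_mult)
    then have "M1\<^sup>T = M2\<^sup>T"
      using full_rank_cancel_left[of "Q\<^sup>T" m m "M1\<^sup>T" l "M2\<^sup>T"] mrank_transpose[OF Q(1)] Q(1) that
      by (simp add: Q(2))
    then show ?thesis by (metis transpose_transpose)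
  qed
  have "?psi M \<in> ?D" if "M \<in> ?D" for M
  proof -
    have M: "M \<in> carrier_mat l m" "M \<noteq> 0\<^sub>m l m" "mrank M \<le> t" using that unfolding Dhat_def by auto
    have "mrank (?psi M) \<le> mrank M"
      using mrank_mult_left[of "P * M" l m Q m] mrank_mult_right[of P l l M m] P Q M by fastforce
    moreover have "?psi M \<noteq> 0\<^sub>m l m" using inj[of M "0\<^sub>m l m"] M P Q by auto
    ultimately show ?thesis using M P Q unfolding Dhat_def by auto
  qed
  moreover have "inj_on ?psi ?D" using inj unfolding Dhat_def by (auto intro: inj_onI)
  ultimately show ?thesis
    using card_subset_eq[OF finite_Dhat, of "?psi ` ?D"] card_image unfolding bij_betw_def by blast
qed

lemma card_frob_inner_nonzero_equiv:
  fixes G :: "'a::{finite,field} mat"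
  assumes P: "P \<in> carrier_mat l l" "mrank P = l" and Q: "Q \<in> carrier_mat m m" "mrank Q = m"
    and G: "G \<in> carrier_mat l m"
  shows "card {M \<in> Dhat TYPE('a) t l m. frob_inner l m (P * G * Q) M \<noteq> 0}
       = card {M \<in> Dhat TYPE('a) t l m. frob_inner l m G M \<noteq> 0}"
proof -
  have "frob_inner l m (P * G * Q) M = frob_inner l m G (P\<^sup>T * M * Q\<^sup>T)" if "M \<in> carrier_mat l m" for M
    using frob_inner_mult_right[of Q m "P * G" l M] frob_inner_mult_left[of P l G m "M * Q\<^sup>T"] P Q G that
    by (simp add: assoc_mult_mat)
  moreover have "bij_betw (\<lambda>M. P\<^sup>T * M * Q\<^sup>T) (Dhat TYPE('a) t l m) (Dhat TYPE('a) t l m)"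
    using bij_betw_equiv_Dhat[of "P\<^sup>T" l "Q\<^sup>T" m t] P Q mrank_transpose[OF P(1)] mrank_transpose[OF Q(1)]
    by simp
  ultimately have "bij_betw (\<lambda>M. P\<^sup>T * M * Q\<^sup>T) {M \<in> Dhat TYPE('a) t l m. frob_inner l m (P * G * Q) M \<noteq> 0}
       {M \<in> Dhat TYPE('a) t l m. frob_inner l m G M \<noteq> 0}"
    by (intro bij_betw_Collect) (auto simp: Dhat_def)
  then show ?thesis by (rule bij_betw_same_card)
qed

lemma nonzero_mat_obtain_entry:
  fixes N :: "'a::zero mat"
  assumes "N \<in> carrier_mat l m" and "N \<noteq> 0\<^sub>m l m"
  obtains i j where "i < l" "j < m" "N $$ (i,j) \<noteq> 0"
proof -
  have "\<not> (\<forall>i<l. \<forall>j<m. N $$ (i,j) = 0)"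
    using assms by (auto intro!: eq_matI)
  then show thesis using that by blast
qed

lemma smult_mem_Dhat:
  fixes N :: "'a::{finite,field} mat"
  assumes N: "N \<in> Dhat TYPE('a) t l m" and c: "c \<noteq> 0"
  shows "c \<cdot>\<^sub>m N \<in> Dhat TYPE('a) t l m"
proof -
  have Nc: "N \<in> carrier_mat l m" and N0: "N \<noteq> 0\<^sub>m l m" and Nr: "mrank N \<le> t"
    using N unfolding Dhat_def by auto
  obtain i j where ij: "i < l" "j < m" "N $$ (i,j) \<noteq> 0" using nonzero_mat_obtain_entry[OF Nc N0] .
  then have "(c \<cdot>\<^sub>m N) $$ (i,j) \<noteq> (0\<^sub>m l m :: 'a mat) $$ (i,j)" using c Nc by simp
  then have "c \<cdot>\<^sub>m N \<noteq> 0\<^sub>m l m" by metis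
  then show ?thesis using Nc mrank_smult_le[OF Nc, of c] Nr unfolding Dhat_def by auto
qed

lemma bij_betw_smult_rep_set:
  fixes R :: "'a::{finite,field} mat set"
  assumes rep: "is_rep_set R t l m"
  shows "bij_betw (\<lambda>(c, N). c \<cdot>\<^sub>m N) ({c. c \<noteq> 0} \<times> R) (Dhat TYPE('a) t l m)"
proof (rule bij_betw_imageI)
  have RD: "R \<subseteq> Dhat TYPE('a) t l m"
    and uniq: "\<And>M. M \<in> Dhat TYPE('a) t l m \<Longrightarrow> \<exists>!N. N \<in> R \<and> (\<exists>c. c \<noteq> 0 \<and> M = c \<cdot>\<^sub>m N)"
    using rep unfolding is_rep_set_def by auto
  show "inj_on (\<lambda>(c, N). c \<cdot>\<^sub>m N) ({c. c \<noteq> 0} \<times> R)"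
  proof (rule inj_onI, clarify)
    fix c1 N1 c2 N2
    assume c: "c1 \<noteq> 0" "c2 \<noteq> 0" and N: "N1 \<in> R" "N2 \<in> R" and e: "c1 \<cdot>\<^sub>m N1 = c2 \<cdot>\<^sub>m N2"
    have N1D: "N1 \<in> Dhat TYPE('a) t l m" using N RD by blast
    have "\<exists>c. c \<noteq> 0 \<and> c1 \<cdot>\<^sub>m N1 = c \<cdot>\<^sub>m N1" "\<exists>c. c \<noteq> 0 \<and> c1 \<cdot>\<^sub>m N1 = c \<cdot>\<^sub>m N2"
      using c e by blast+
    then have N12: "N1 = N2" using uniq[OF smult_mem_Dhat[OF N1D c(1)]] N by blast
    have "N1 \<in> carrier_mat l m" "N1 \<noteq> 0\<^sub>m l m" using N1D unfolding Dhat_def by auto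
    then obtain i j where ij: "i < l" "j < m" "N1 $$ (i,j) \<noteq> 0" by (rule nonzero_mat_obtain_entry)
    have "c1 * N1 $$ (i,j) = c2 * N1 $$ (i,j)"
      using arg_cong[OF e, of "\<lambda>M. M $$ (i,j)"] N12 ij \<open>N1 \<in> carrier_mat l m\<close> by simp
    then show "c1 = c2 \<and> N1 = N2" using ij(3) N12 by simp
  qed
  show "(\<lambda>(c, N). c \<cdot>\<^sub>m N) ` ({c. c \<noteq> 0} \<times> R) = Dhat TYPE('a) t l m"
  proof
    show "(\<lambda>(c, N). c \<cdot>\<^sub>m N) ` ({c. c \<noteq> 0} \<times> R) \<subseteq> Dhat TYPE('a) t l m"
      using smult_mem_Dhat[where 'a='a] RD by auto
    show "Dhat TYPE('a) t l m \<subseteq> (\<lambda>(c, N). c \<cdot>\<^sub>m N) ` ({c. c \<noteq> 0} \<times> R)"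
    proof
      fix M assume "M \<in> Dhat TYPE('a) t l m"
      then obtain N c where "N \<in> R" "c \<noteq> 0" "M = c \<cdot>\<^sub>m N" using uniq by blast
      then show "M \<in> (\<lambda>(c, N). c \<cdot>\<^sub>m N) ` ({c. c \<noteq> 0} \<times> R)" by force
    qed
  qed
qed

lemma card_frob_inner_nonzero_Dhat:
  fixes R :: "'a::{finite,field} mat set"
  assumes rep: "is_rep_set R t l m"
  shows "card {M \<in> Dhat TYPE('a) t l m. frob_inner l m F M \<noteq> 0}
     = (card (UNIV::'a set) - 1) * wt R (codeword l m R F)"
proof -
  let ?S = "{N \<in> R. frob_inner l m F N \<noteq> 0}"
  have RD: "R \<subseteq> Dhat TYPE('a) t l m" using rep unfolding is_rep_set_def by auto
  have "bij_betw (\<lambda>(c, N). c \<cdot>\<^sub>m N) {x \<in> {c. c \<noteq> 0} \<times> R. frob_inner l m F (snd x) \<noteq> 0}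
      {M \<in> Dhat TYPE('a) t l m. frob_inner l m F M \<noteq> 0}"
    by (rule bij_betw_Collect[OF bij_betw_smult_rep_set[OF rep]])
      (use RD in \<open>auto simp: frob_inner_smult Dhat_def\<close>)
  moreover have "{x \<in> {c. c \<noteq> 0} \<times> R. frob_inner l m F (snd x) \<noteq> 0} = {c::'a. c \<noteq> 0} \<times> ?S"
    by auto
  ultimately have "card {M \<in> Dhat TYPE('a) t l m. frob_inner l m F M \<noteq> 0} = card ({c::'a. c \<noteq> 0} \<times> ?S)"
    by (simp add: bij_betw_same_card)
  also have "\<dots> = card {c::'a. c \<noteq> 0} * card ?S" by (rule card_cartesian_product)
  also have "card {c::'a. c \<noteq> 0} = card (UNIV::'a set) - 1"
    using card_Diff_singleton[of 0 "UNIV :: 'a set"] by (simp add: Compl_eq_Diff_UNIV[symmetric] Collect_neg_eq)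
  also have "?S = {N \<in> R. codeword l m R F N \<noteq> 0}" by (auto simp: codeword_eq)
  finally show ?thesis unfolding wt_def .
qed

definition tau_nonzero :: "nat \<Rightarrow> nat \<Rightarrow> nat \<Rightarrow> nat \<Rightarrow> 'a::field mat set" where
  "tau_nonzero t l m r = {M. M \<in> carrier_mat l m \<and> 1 \<le> mrank M \<and> mrank M \<le> t \<and> tau r M \<noteq> 0}"

lemma wt_codeword:
  fixes R :: "'a::{finite,field} mat set"
  assumes rep: "is_rep_set R t l m" and F: "F \<in> carrier_mat l m"
  shows "(card (UNIV::'a set) - 1) * wt R (codeword l m R F) = card (tau_nonzero t l m (mrank F) :: 'a mat set)"
proof -
  obtain P Q where P: "P \<in> carrier_mat l l" "mrank P = l" and Q: "Q \<in> carrier_mat m m" "mrank Q = m"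
    and e: "F = P * rank_std_mat l m (mrank F) * Q" using rank_normal_form[OF F] .
  define E :: "'a mat" where "E = rank_std_mat l m (mrank F)"
  have "(card (UNIV::'a set) - 1) * wt R (codeword l m R F)
      = card {M \<in> Dhat TYPE('a) t l m. frob_inner l m (P * E * Q) M \<noteq> 0}"
    using card_frob_inner_nonzero_Dhat[OF rep, of F] e unfolding E_def by simp
  also have "\<dots> = card {M \<in> Dhat TYPE('a) t l m. frob_inner l m E M \<noteq> 0}"
    using card_frob_inner_nonzero_equiv[OF P Q] unfolding E_def by simp
  also have "{M \<in> Dhat TYPE('a) t l m. frob_inner l m E M \<noteq> 0} = tau_nonzero t l m (mrank F)"
    unfolding tau_nonzero_def mem_Dhat_iff E_def
    by (auto simp: frob_inner_rank_std_mat[OF mrank_le_row[OF F] mrank_le_col[OF F]])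
  finally show ?thesis .
qed

section \<open>Comparison of the weights\<close>

lemma addcol_neg_addcol:
  assumes "j < dim_col M" "j \<noteq> k"
  shows "addcol (- a) k j (addcol a k j M) = (M :: 'a::comm_ring_1 mat)"
  by (rule eq_matI) (use assms in \<open>auto simp: algebra_simps\<close>)

lemma mrank_addcol:
  fixes M :: "'a::field mat"
  assumes M: "M \<in> carrier_mat l m" and jk: "j < m" "j \<noteq> k"
  shows "mrank (addcol a k j M) = mrank M"
proof -
  have le: "mrank (addcol b k j N) \<le> mrank N" if N: "N \<in> carrier_mat l m" for b and N :: "'a mat"
  proof -
    have "addcol b k j N = N * addrow_mat m b j k" by (rule addcol_mat[OF N jk(1)])
    then show ?thesis using mrank_mult_left[OF N addrow_mat_carrier] by (simp only:)
  qed
  have C: "addcol a k j M \<in> carrier_mat l m" by (rule carrier_matI) (use M in auto)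
  have "j < dim_col M" using M jk by simp
  then have "mrank M = mrank (addcol (- a) k j (addcol a k j M))"
    using addcol_neg_addcol[OF _ jk(2), of M a] by simp
  also have "\<dots> \<le> mrank (addcol a k j M)" by (rule le[OF C])
  finally show ?thesis using le[OF M, of a] by linarith
qed

definition row0_pivot :: "'a::zero mat \<Rightarrow> nat" where
  "row0_pivot M = (LEAST j. 0 < j \<and> j < dim_col M \<and> M $$ (0,j) \<noteq> 0)"

text \<open>Kills the corner entry without raising the rank and without touching the other columns: by a
  column operation with a pivot from the first row if there is one, else by clearing the first row,
  which then vanishes outside the corner anyway.\<close>

definition clear_corner :: "'a::field mat \<Rightarrow> 'a mat" where
  "clear_corner M = (if \<exists>j. 0 < j \<and> j < dim_col M \<and> M $$ (0,j) \<noteq> 0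
     then addcol (- (M $$ (0,0) / M $$ (0, row0_pivot M))) 0 (row0_pivot M) M
     else multrow 0 0 M)"

lemma row0_pivot:
  assumes "\<exists>j. 0 < j \<and> j < dim_col M \<and> M $$ (0,j) \<noteq> 0"
  shows "0 < row0_pivot M" "row0_pivot M < dim_col M" "M $$ (0, row0_pivot M) \<noteq> 0"
  using LeastI_ex[OF assms] unfolding row0_pivot_def by auto

lemma clear_corner_carrier [simp]: "M \<in> carrier_mat l m \<Longrightarrow> clear_corner M \<in> carrier_mat l m"
  unfolding clear_corner_def by auto

lemma clear_corner_index_other:
  assumes M: "M \<in> carrier_mat l m" and ik: "i < l" "0 < k" "k < m"
  shows "clear_corner M $$ (i,k) = M $$ (i,k)"
  using M ik row0_pivot[of M] unfolding clear_corner_def by auto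

lemma clear_corner_corner:
  assumes M: "M \<in> carrier_mat l m" and "0 < l" "0 < m"
  shows "clear_corner M $$ (0,0) = 0"
  using assms row0_pivot[of M] unfolding clear_corner_def by auto

lemma clear_corner_index_no_pivot:
  assumes M: "M \<in> carrier_mat l m" and row0: "\<And>j. 0 < j \<Longrightarrow> j < m \<Longrightarrow> M $$ (0,j) = 0"
    and ik: "i < l" "k < m" "(i,k) \<noteq> (0,0)"
  shows "clear_corner M $$ (i,k) = M $$ (i,k)"
  using assms unfolding clear_corner_def by auto

lemma mrank_clear_corner_le:
  fixes M :: "'a::field mat"
  assumes M: "M \<in> carrier_mat l m"
  shows "mrank (clear_corner M) \<le> mrank M"
proof (cases "\<exists>j. 0 < j \<and> j < dim_col M \<and> M $$ (0,j) \<noteq> 0")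
  case True
  then have "clear_corner M = addcol (- (M $$ (0,0) / M $$ (0, row0_pivot M))) 0 (row0_pivot M) M"
    by (simp only: clear_corner_def if_P[OF True] if_True)
  then show ?thesis using mrank_addcol[OF M] row0_pivot[OF True] M by simp
next
  case False
  have "clear_corner M = multrow_mat l 0 0 * M"
    unfolding clear_corner_def if_not_P[OF False] by (rule multrow_mat[OF M])
  then show ?thesis using mrank_mult_right[OF multrow_mat_carrier M] by simp
qed

lemma clear_corner_inj:
  fixes M1 :: "'a::field mat"
  assumes M: "M1 \<in> carrier_mat l m" "M2 \<in> carrier_mat l m" and l: "0 < l"
    and e: "clear_corner M1 = clear_corner M2" and c: "M1 $$ (0,0) = M2 $$ (0,0)"
  shows "M1 = M2"
proof -
  have other: "M1 $$ (i,k) = M2 $$ (i,k)" if "i < l" "0 < k" "k < m" for i k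
    using clear_corner_index_other[OF M(1) that] clear_corner_index_other[OF M(2) that] e by simp
  then have row0: "(0 < j \<and> j < m \<and> M1 $$ (0,j) \<noteq> 0) = (0 < j \<and> j < m \<and> M2 $$ (0,j) \<noteq> 0)" for j
    using l by auto
  show ?thesis
  proof (cases "\<exists>j. 0 < j \<and> j < m \<and> M1 $$ (0,j) \<noteq> 0")
    case True
    define J where "J = row0_pivot M1"
    have J: "0 < J" "J < m" using row0_pivot[of M1] True M(1) unfolding J_def by auto
    have J2: "row0_pivot M2 = J" unfolding J_def row0_pivot_def using row0 M by simp
    define a where "a = - (M1 $$ (0,0) / M1 $$ (0,J))"
    have piv2: "\<exists>j. 0 < j \<and> j < dim_col M2 \<and> M2 $$ (0,j) \<noteq> 0" using True row0 M by auto
    have e1: "clear_corner M1 = addcol a 0 J M1"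
      using True M(1) unfolding clear_corner_def a_def J_def by simp
    have e2: "clear_corner M2 = addcol a 0 J M2"
      using piv2 J2 other[OF l J] c unfolding clear_corner_def a_def by simp
    have "M1 = addcol (- a) 0 J (clear_corner M1)" using e1 addcol_neg_addcol[of J M1 0 a] J M(1) by simp
    also have "\<dots> = addcol (- a) 0 J (clear_corner M2)" using e by simp
    also have "\<dots> = M2" using e2 addcol_neg_addcol[of J M2 0 a] J M(2) by simp
    finally show ?thesis .
  next
    case False
    have z1: "M1 $$ (0,j) = 0" and z2: "M2 $$ (0,j) = 0" if "0 < j" "j < m" for j
      using False row0[of j] that by auto
    have no_pivot: "clear_corner M1 $$ (i,k) = M1 $$ (i,k)" "clear_corner M2 $$ (i,k) = M2 $$ (i,k)"
      if "i < l" "k < m" "(i,k) \<noteq> (0,0)" for i k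
      using clear_corner_index_no_pivot[OF M(1) z1 that] clear_corner_index_no_pivot[OF M(2) z2 that] by auto
    show ?thesis
    proof (rule eq_matI)
      fix i k assume "i < dim_row M2" "k < dim_col M2"
      then have ik: "i < l" "k < m" using M by auto
      show "M1 $$ (i,k) = M2 $$ (i,k)"
        using c no_pivot[OF ik] e by (cases "(i,k) = (0,0)") auto
    qed (use M in auto)
  qed
qed

text \<open>Rows 1, ..., t (counting from 0) of the witness are -e_1 + e_t, e_1, ..., e_(t-1), or just -e_1
  if t = 1: they span a t-dimensional space avoiding e_0, so a nonzero corner entry c raises the rank
  from t to t + 1. Off the corner the only nonzero diagonal entry is the -1 at (1,1), so that
  tau_r = c - 1 in every characteristic.\<close>

definition witness_mat :: "nat \<Rightarrow> nat \<Rightarrow> nat \<Rightarrow> 'a::field \<Rightarrow> 'a mat" where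
  "witness_mat t l m c = mat l m (\<lambda>(i,j).
     if i = 0 then (if j = 0 then c else 0)
     else if i = 1 \<and> j = 1 then -1
     else if 2 \<le> i \<and> i \<le> t \<and> j = i - 1 then 1
     else if i = 1 \<and> j = t \<and> 2 \<le> t then 1 else 0)"

lemma witness_mat_dims [simp]:
  "dim_row (witness_mat t l m c) = l" "dim_col (witness_mat t l m c) = m"
  unfolding witness_mat_def by simp_all

lemma witness_mat_carrier [simp]: "witness_mat t l m c \<in> carrier_mat l m"
  by (rule carrier_matI) simp_all

lemma mrank_witness_mat_le:
  assumes t: "1 \<le> t" "t < l"
  shows "mrank (witness_mat t l m (0::'a::field)) \<le> t"
proof -
  let ?W = "witness_mat t l m (0::'a)"
  define U :: "'a mat" where "U = mat l t (\<lambda>(i,a). if i = a + 1 then 1 else 0)"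
  define V :: "'a mat" where "V = mat t m (\<lambda>(a,j). ?W $$ (a + 1, j))"
  have U: "U \<in> carrier_mat l t" and V: "V \<in> carrier_mat t m" unfolding U_def V_def by auto
  have "?W = U * V"
  proof (rule eq_matI)
    fix i j assume "i < dim_row (U * V)" and "j < dim_col (U * V)"
    then have ij: "i < l" "j < m" using U V by auto
    have "(U * V) $$ (i,j) = (\<Sum>a<t. (if i = a + 1 then 1 else 0) * ?W $$ (a + 1, j))"
      using U V ij by (auto simp: U_def V_def scalar_prod_def atLeast0LessThan intro!: sum.cong)
    also have "\<dots> = (\<Sum>a<t. if a = i - 1 then (if 1 \<le> i then ?W $$ (i,j) else 0) else 0)"
      by (rule sum.cong) auto
    also have "\<dots> = ?W $$ (i,j)"
      using ij t by (cases "1 \<le> i \<and> i \<le> t") (auto simp: witness_mat_def)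
    finally show "?W $$ (i,j) = (U * V) $$ (i,j)" ..
  qed (use U V in auto)
  then show ?thesis using mrank_le_factor[OF witness_mat_carrier U V] by simp
qed

lemma mrank_take_cols_le:
  fixes A :: "'a::field mat"
  assumes A: "A \<in> carrier_mat n m" and k: "k \<le> m"
  shows "mrank (mat n k (\<lambda>(i,j). A $$ (i,j))) \<le> mrank A"
proof -
  define S :: "'a mat" where "S = mat m k (\<lambda>(a,b). if a = b then 1 else 0)"
  have S: "S \<in> carrier_mat m k" unfolding S_def by simp
  have "mat n k (\<lambda>(i,j). A $$ (i,j)) = A * S"
  proof (rule eq_matI)
    fix i j assume "i < dim_row (A * S)" and "j < dim_col (A * S)"
    then have ij: "i < n" "j < k" using A S by auto
    have "(A * S) $$ (i,j) = (\<Sum>a<m. A $$ (i,a) * (if a = j then 1 else 0))"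
      using A S ij by (auto simp: S_def scalar_prod_def atLeast0LessThan intro!: sum.cong)
    also have "\<dots> = (\<Sum>a<m. if a = j then A $$ (i,j) else 0)" by (rule sum.cong) auto
    finally show "mat n k (\<lambda>(i,j). A $$ (i,j)) $$ (i,j) = (A * S) $$ (i,j)" using ij k by simp
  qed (use A S in auto)
  then show ?thesis using mrank_mult_left[OF A S] by simp
qed

lemma witness_mat_mult_vec_index:
  fixes c :: "'a::field"
  assumes t: "1 \<le> t" "t < l" "l \<le> m" and i: "i \<le> t"
  shows "(\<Sum>k<t + 1. witness_mat t l m c $$ (i,k) * v $ k)
    = (if i = 0 then c * v $ 0 else if i = 1 then - v $ 1 + (if 2 \<le> t then v $ t else 0) else v $ (i - 1))"
proof -
  have "(\<Sum>k<t + 1. witness_mat t l m c $$ (i,k) * v $ k)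
      = (\<Sum>k<t + 1. (if k = 0 then (if i = 0 then c * v $ 0 else 0) else 0)
          + (if k = 1 then (if i = 1 then - v $ 1 else 0) else 0)
          + (if k = t then (if i = 1 \<and> 2 \<le> t then v $ t else 0) else 0)
          + (if k = i - 1 then (if 2 \<le> i then v $ (i - 1) else 0) else 0))"
    by (rule sum.cong) (use t i in \<open>auto simp: witness_mat_def\<close>)
  also have "\<dots> = (if i = 0 then c * v $ 0 else 0) + (if i = 1 then - v $ 1 else 0)
      + (if i = 1 \<and> 2 \<le> t then v $ t else 0) + (if 2 \<le> i then v $ (i - 1) else 0)"
    using t i by (simp only: sum.distrib sum.delta finite_lessThan lessThan_iff) auto
  finally show ?thesis by auto
qed

lemma mrank_witness_mat_ge:
  fixes c :: "'a::field"
  assumes t: "1 \<le> t" "t < l" "l \<le> m" and c: "c \<noteq> 0"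
  shows "t + 1 \<le> mrank (witness_mat t l m c)"
proof -
  define X :: "'a mat" where "X = mat l (t + 1) (\<lambda>(i,j). witness_mat t l m c $$ (i,j))"
  have X: "X \<in> carrier_mat l (t + 1)" unfolding X_def by simp
  have "mrank X = t + 1"
  proof (rule mrank_eq_if_trivial_kernel[OF X])
    fix v assume v: "v \<in> carrier_vec (t + 1)" and Xv: "X *\<^sub>v v = 0\<^sub>v l"
    have row: "(if i = 0 then c * v $ 0 else if i = 1 then - v $ 1 + (if 2 \<le> t then v $ t else 0)
        else v $ (i - 1)) = 0" if "i \<le> t" for i
    proof -
      have "(if i = 0 then c * v $ 0 else if i = 1 then - v $ 1 + (if 2 \<le> t then v $ t else 0)
          else v $ (i - 1)) = (\<Sum>k<t + 1. witness_mat t l m c $$ (i,k) * v $ k)"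
        by (rule witness_mat_mult_vec_index[OF t that, symmetric])
      also have "\<dots> = (X *\<^sub>v v) $ i"
        using X v that t by (auto simp: X_def scalar_prod_def atLeast0LessThan intro!: sum.cong)
      also have "\<dots> = 0" using Xv that t by simp
      finally show ?thesis .
    qed
    have v0: "v $ 0 = 0" using row[of 0] c by simp
    have vmid: "v $ j = 0" if "1 \<le> j" "j < t" for j using row[of "j + 1"] that by simp
    have vt: "v $ t = 0"
    proof (cases "2 \<le> t")
      case True
      then show ?thesis using row[of 1] vmid[of 1] by simp
    next
      case False
      then have "t = 1" using t by simp
      then show ?thesis using row[of 1] by simp
    qed
    show "v = 0\<^sub>v (t + 1)"
    proof (rule eq_vecI)
      fix j assume "j < dim_vec (0\<^sub>v (t + 1) :: 'a vec)"
      then show "v $ j = 0\<^sub>v (t + 1) $ j" using v0 vmid[of j] vt by (cases "j = 0"; cases "j = t") auto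
    qed (use v in simp)
  qed
  moreover have "mrank X \<le> mrank (witness_mat t l m c)"
    unfolding X_def using t by (intro mrank_take_cols_le[OF witness_mat_carrier]) simp
  ultimately show ?thesis by simp
qed

lemma tau_Suc: "tau (Suc r) M = M $$ (0,0) + (\<Sum>i\<in>{1..<Suc r}. M $$ (i,i))"
  unfolding tau_def by (simp add: lessThan_atLeast0 sum.atLeast_Suc_lessThan)

lemma tau_1: "tau 1 M = M $$ (0,0)"
  unfolding tau_def by simp

lemma tau_zero_mat: "r \<le> l \<Longrightarrow> r \<le> m \<Longrightarrow> tau r (0\<^sub>m l m) = (0::'a::field)"
  unfolding tau_def by (intro sum.neutral) auto

lemma tau_clear_corner:
  fixes M :: "'a::field mat"
  assumes M: "M \<in> carrier_mat l m" and r: "1 \<le> r" "r \<le> l" "r \<le> m"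
  shows "tau r (clear_corner M) = tau r M - M $$ (0,0)"
proof -
  obtain r' where r': "r = Suc r'" using r by (cases r) auto
  have "(\<Sum>i\<in>{1..<r}. clear_corner M $$ (i,i)) = (\<Sum>i\<in>{1..<r}. M $$ (i,i))"
    by (rule sum.cong) (use clear_corner_index_other[OF M] r in auto)
  then show ?thesis using clear_corner_corner[OF M] r unfolding r' tau_Suc by simp
qed

lemma tau_witness_mat:
  assumes "2 \<le> r" "r \<le> l" "l \<le> m"
  shows "tau r (witness_mat t l m c) = c - (1::'a::field)"
proof -
  obtain r' where r': "r = Suc (Suc r')" using assms by (metis add_2_eq_Suc le_Suc_ex)
  have "(\<Sum>i\<in>{1..<r}. witness_mat t l m c $$ (i,i)) = (\<Sum>i\<in>{1..<r}. if i = 1 then -1 else 0)"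
    by (rule sum.cong) (use assms in \<open>auto simp: witness_mat_def\<close>)
  also have "\<dots> = -1" using assms by simp
  finally show ?thesis using assms unfolding r' tau_Suc by (simp add: witness_mat_def)
qed

text \<open>The only candidate preimage is the witness with corner entry 1, whose rank exceeds t.\<close>

lemma clear_corner_ne_witness_mat:
  fixes M :: "'a::field mat"
  assumes t: "1 \<le> t" "t < l" "l \<le> m" and r: "2 \<le> r" "r \<le> l"
    and M: "M \<in> carrier_mat l m" "mrank M \<le> t" "tau r M = 0"
  shows "clear_corner M \<noteq> witness_mat t l m 0"
proof
  assume W: "clear_corner M = witness_mat t l m 0"
  have row0: "M $$ (0,j) = 0" if "0 < j" "j < m" for j
  proof -
    have "M $$ (0,j) = clear_corner M $$ (0,j)" using clear_corner_index_other[OF M(1) _ that] t by simp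
    also have "\<dots> = 0" using W that t by (simp add: witness_mat_def)
    finally show ?thesis .
  qed
  have "tau r (witness_mat t l m (0::'a)) = - M $$ (0,0)"
    using tau_clear_corner[OF M(1)] M(3) W r t by simp
  then have corner: "M $$ (0,0) = 1" using tau_witness_mat[OF r t(3), of t "0::'a"] by simp
  have "M = witness_mat t l m 1"
  proof (rule eq_matI)
    fix i k assume "i < dim_row (witness_mat t l m (1::'a))" "k < dim_col (witness_mat t l m (1::'a))"
    then have ik: "i < l" "k < m" by auto
    show "M $$ (i,k) = witness_mat t l m 1 $$ (i,k)"
    proof (cases "(i,k) = (0,0)")
      case True
      then show ?thesis using corner ik by (simp add: witness_mat_def)
    next
      case False
      then have "M $$ (i,k) = witness_mat t l m 0 $$ (i,k)"
        using clear_corner_index_no_pivot[OF M(1) row0 ik] W by simp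
      then show ?thesis using False ik by (auto simp: witness_mat_def)
    qed
  qed (use M in auto)
  then show False using mrank_witness_mat_ge[OF t, of "1::'a"] M(2) by simp
qed

lemma witness_mat_mem_tau_nonzero:
  assumes t: "1 \<le> t" "t < l" "l \<le> m" and r: "2 \<le> r" "r \<le> l"
  shows "witness_mat t l m (0::'a::field) \<in> tau_nonzero t l m r - tau_nonzero t l m 1"
proof -
  let ?W = "witness_mat t l m (0::'a)"
  have "tau r ?W = -1" using tau_witness_mat[OF r t(3), of t "0::'a"] by simp
  moreover have "tau 1 ?W = 0" using t unfolding tau_1 by (simp add: witness_mat_def)
  moreover have "?W \<noteq> 0\<^sub>m l m" using tau_zero_mat[of r l m, where 'a='a] calculation(1) r t by auto
  then have "1 \<le> mrank ?W" using mrank_pos_iff[OF witness_mat_carrier] by blast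
  ultimately show ?thesis using mrank_witness_mat_le[OF t(1,2)] unfolding tau_nonzero_def by simp
qed

lemma card_lt_card_if_inj_on_diff:
  assumes fin: "finite A" "finite B" and inj: "inj_on f (A - B)" and img: "f ` (A - B) \<subseteq> B - A"
    and w: "w \<in> B - A" "w \<notin> f ` (A - B)"
  shows "card A < card B"
proof -
  have "card (A - B) = card (f ` (A - B))" using card_image[OF inj] by simp
  also have "\<dots> \<le> card (B - A - {w})" using img w fin by (intro card_mono) auto
  also have "\<dots> < card (B - A)" using w fin by (intro card_Diff1_less) auto
  finally have "card (A - B) < card (B - A)" .
  then show ?thesis using card_Int_Diff[OF fin(1), of B] card_Int_Diff[OF fin(2), of A]
    by (simp add: Int_commute)
qed

lemma card_tau_nonzero_1_lt:
  assumes t: "1 \<le> t" "t < l" "l \<le> m" and r: "2 \<le> r" "r \<le> l"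
  shows "card (tau_nonzero t l m 1 :: 'a::{finite,field} mat set) < card (tau_nonzero t l m r :: 'a mat set)"
proof (rule card_lt_card_if_inj_on_diff)
  let ?A = "tau_nonzero t l m 1 :: 'a mat set" and ?B = "tau_nonzero t l m r :: 'a mat set"
  have l0: "0 < l" and m0: "0 < m" and rm: "r \<le> m" using t r by auto
  show "finite ?A" "finite ?B" unfolding tau_nonzero_def by (rule finite_subset[OF _ finite_carrier_mat], blast)+
  have AB: "M \<in> carrier_mat l m \<and> 1 \<le> mrank M \<and> mrank M \<le> t \<and> M $$ (0,0) \<noteq> 0 \<and> tau r M = 0"
    if "M \<in> ?A - ?B" for M using that unfolding tau_nonzero_def tau_1 by auto
  show "clear_corner ` (?A - ?B) \<subseteq> ?B - ?A"
  proof (rule image_subsetI)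
    fix M assume "M \<in> ?A - ?B"
    note M = AB[OF this]
    then have "tau r (clear_corner M) = - M $$ (0,0)" using tau_clear_corner[of M l m r] r rm by simp
    then have "tau r (clear_corner M) \<noteq> 0" using M by simp
    moreover from this have "clear_corner M \<noteq> 0\<^sub>m l m" using tau_zero_mat[OF r(2) rm] by auto
    ultimately show "clear_corner M \<in> ?B - ?A"
      using M mrank_pos_iff[of "clear_corner M" l m] mrank_clear_corner_le[of M l m]
        clear_corner_corner[OF _ l0 m0, of M]
      unfolding tau_nonzero_def tau_1 by auto
  qed
  have tau_clear: "tau r (clear_corner M) = - M $$ (0,0)" if "M \<in> ?A - ?B" for M
    using tau_clear_corner[of M l m r] AB[OF that] r rm by simp
  show "inj_on clear_corner (?A - ?B)"
  proof (rule inj_onI)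
    fix M1 M2 assume M: "M1 \<in> ?A - ?B" "M2 \<in> ?A - ?B" and e: "clear_corner M1 = clear_corner M2"
    then have "M1 $$ (0,0) = M2 $$ (0,0)" using tau_clear[OF M(1)] tau_clear[OF M(2)] by simp
    then show "M1 = M2" using clear_corner_inj[OF _ _ l0 e] AB[OF M(1)] AB[OF M(2)] by blast
  qed
  let ?W = "witness_mat t l m (0::'a)"
  show "?W \<in> ?B - ?A" by (rule witness_mat_mem_tau_nonzero[OF t r])
  show "?W \<notin> clear_corner ` (?A - ?B)"
  proof
    assume "?W \<in> clear_corner ` (?A - ?B)"
    then obtain M where M: "M \<in> ?A - ?B" and "?W = clear_corner M" by blast
    then show False using clear_corner_ne_witness_mat[OF t r] AB[OF M] by metis
  qed
qed

section \<open>Minimum weight codewords\<close>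

lemma codeword_lincomb:
  "codeword l m R (mat l m (\<lambda>ij. \<Sum>s\<in>S. a s * F s $$ ij)) = (\<lambda>N. \<Sum>s\<in>S. a s * codeword l m R (F s) N)"
proof (rule ext)
  fix N
  have "(\<Sum>i<l. \<Sum>j<m. (\<Sum>s\<in>S. a s * F s $$ (i,j)) * N $$ (i,j))
      = (\<Sum>i<l. \<Sum>s\<in>S. \<Sum>j<m. a s * F s $$ (i,j) * N $$ (i,j))"
    by (simp add: sum_distrib_right sum.swap[of _ S])
  also have "\<dots> = (\<Sum>s\<in>S. \<Sum>i<l. \<Sum>j<m. a s * F s $$ (i,j) * N $$ (i,j))"
    by (rule sum.swap)
  also have "\<dots> = (\<Sum>s\<in>S. a s * (\<Sum>i<l. \<Sum>j<m. F s $$ (i,j) * N $$ (i,j)))"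
    by (simp add: sum_distrib_left mult.assoc)
  finally show "codeword l m R (mat l m (\<lambda>ij. \<Sum>s\<in>S. a s * F s $$ ij)) N
      = (\<Sum>s\<in>S. a s * codeword l m R (F s) N)"
    unfolding codeword_def by simp
qed

lemma codeword_diff:
  assumes "F \<in> carrier_mat l m" "G \<in> carrier_mat l m"
  shows "codeword l m R (F - G) = (\<lambda>N. codeword l m R F N - codeword l m R G N)"
  unfolding codeword_def using assms by (auto simp: sum_subtractf[symmetric] left_diff_distrib)

lemma lin_span_sum_mem:
  assumes "finite I" and "g ` I \<subseteq> W"
  shows "(\<lambda>x. \<Sum>i\<in>I. c i * g i x) \<in> lin_span W"
proof -
  define a where "a w = (\<Sum>i\<in>{i \<in> I. g i = w}. c i)" for w
  have "(\<Sum>i\<in>I. c i * g i x) = (\<Sum>w\<in>g ` I. a w * w x)" for x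
  proof -
    have "(\<Sum>i\<in>I. c i * g i x) = (\<Sum>w\<in>g ` I. \<Sum>i\<in>{i \<in> I. g i = w}. c i * g i x)"
      by (rule sum.image_gen[OF assms(1)])
    also have "\<dots> = (\<Sum>w\<in>g ` I. a w * w x)"
      unfolding a_def by (intro sum.cong refl) (auto simp: sum_distrib_right)
    finally show ?thesis .
  qed
  then show ?thesis using assms unfolding lin_span_def by blast
qed

definition single_entry_mat :: "nat \<Rightarrow> nat \<Rightarrow> nat \<Rightarrow> nat \<Rightarrow> 'a::{zero,one} mat" where
  "single_entry_mat l m i j = mat l m (\<lambda>(a,b). if a = i \<and> b = j then 1 else 0)"

lemma single_entry_mat_carrier [simp]: "single_entry_mat l m i j \<in> carrier_mat l m"
  unfolding single_entry_mat_def by simp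

lemma mrank_single_entry_mat:
  assumes "i < l" "j < m"
  shows "mrank (single_entry_mat l m i j :: 'a::field mat) = 1"
proof -
  have "single_entry_mat l m i j = mat l m (\<lambda>(a,b). (if a = i then 1 else 0) * (if b = j then 1 else (0::'a)))"
    unfolding single_entry_mat_def by (intro eq_matI) auto
  then have "mrank (single_entry_mat l m i j :: 'a mat) \<le> 1" using mrank_outer_prod_le by metis
  moreover have "single_entry_mat l m i j \<noteq> (0\<^sub>m l m :: 'a mat)"
  proof
    assume "single_entry_mat l m i j = (0\<^sub>m l m :: 'a mat)"
    then have "single_entry_mat l m i j $$ (i,j) = (0\<^sub>m l m :: 'a mat) $$ (i,j)" by simp
    then show False using assms by (simp add: single_entry_mat_def)
  qed
  ultimately show ?thesis using mrank_pos_iff[OF single_entry_mat_carrier] by (metis le_antisym)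
qed

lemma mat_eq_sum_single_entry:
  fixes F :: "'a::comm_ring_1 mat"
  assumes "F \<in> carrier_mat l m"
  shows "F = mat l m (\<lambda>ij. \<Sum>p\<in>{..<l} \<times> {..<m}. F $$ p * single_entry_mat l m (fst p) (snd p) $$ ij)"
proof (rule eq_matI)
  fix i j assume "i < dim_row (mat l m (\<lambda>ij. \<Sum>p\<in>{..<l} \<times> {..<m}. F $$ p * single_entry_mat l m (fst p) (snd p) $$ ij))"
    and "j < dim_col (mat l m (\<lambda>ij. \<Sum>p\<in>{..<l} \<times> {..<m}. F $$ p * single_entry_mat l m (fst p) (snd p) $$ ij))"
  then have ij: "i < l" "j < m" by auto
  have "(\<Sum>p\<in>{..<l} \<times> {..<m}. F $$ p * single_entry_mat l m (fst p) (snd p) $$ (i,j))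
      = (\<Sum>p\<in>{..<l} \<times> {..<m}. if p = (i,j) then F $$ (i,j) else 0)"
    using ij by (intro sum.cong refl) (auto simp: single_entry_mat_def)
  then show "F $$ (i,j) = mat l m (\<lambda>ij. \<Sum>p\<in>{..<l} \<times> {..<m}. F $$ p * single_entry_mat l m (fst p) (snd p) $$ ij) $$ (i,j)"
    using ij by simp
qed (use assms in auto)

lemma card_field_gt_1: "1 < card (UNIV :: 'a::{finite,field} set)"
proof -
  have "card {0::'a, 1} \<le> card (UNIV :: 'a set)" by (rule card_mono) auto
  then show ?thesis by simp
qed

lemma wt_codeword_eq_if_mrank_eq:
  fixes R :: "'a::{finite,field} mat set"
  assumes rep: "is_rep_set R t l m" and F: "F \<in> carrier_mat l m" and G: "G \<in> carrier_mat l m"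
    and "mrank F = mrank G"
  shows "wt R (codeword l m R F) = wt R (codeword l m R G)"
proof -
  have "(card (UNIV :: 'a set) - 1) * wt R (codeword l m R F) = (card (UNIV :: 'a set) - 1) * wt R (codeword l m R G)"
    using wt_codeword[OF rep F] wt_codeword[OF rep G] assms(4) by simp
  then show ?thesis using card_field_gt_1[where 'a='a] by simp
qed

text \<open>A rank factorisation F = U V splits F into the rk F products of a column of U with the
  corresponding row of V.\<close>

lemma codeword_eq_sum_rank_le_one:
  fixes F :: "'a::field mat"
  assumes F: "F \<in> carrier_mat l m"
  obtains Fs where "length Fs = mrank F" and "\<And>G. G \<in> set Fs \<Longrightarrow> G \<in> carrier_mat l m \<and> mrank G \<le> 1"
    and "codeword l m R F = (\<lambda>N. \<Sum>G\<leftarrow>Fs. codeword l m R G N)"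
proof -
  define k where "k = mrank F"
  obtain U V where U: "U \<in> carrier_mat l k" and V: "V \<in> carrier_mat k m" and FUV: "F = U * V"
    using mrank_factor[OF F] unfolding k_def .
  define Fa where "Fa a = mat l m (\<lambda>(i,j). U $$ (i,a) * V $$ (a,j))" for a
  have "F = mat l m (\<lambda>ij. \<Sum>a\<in>{..<k}. 1 * Fa a $$ ij)"
    by (rule eq_matI) (use FUV U V in \<open>auto simp: Fa_def scalar_prod_def atLeast0LessThan\<close>)
  then have "codeword l m R F = (\<lambda>N. \<Sum>a<k. codeword l m R (Fa a) N)"
    using codeword_lincomb[where S="{..<k}" and a="\<lambda>_. 1" and F=Fa] by simp
  also have "\<dots> = (\<lambda>N. \<Sum>G\<leftarrow>map Fa [0..<k]. codeword l m R G N)"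
    by (simp add: sum_set_upt_conv_sum_list_nat[symmetric] atLeast0LessThan o_def)
  moreover have "G \<in> carrier_mat l m \<and> mrank G \<le> 1" if "G \<in> set (map Fa [0..<k])" for G
    using that mrank_outer_prod_le unfolding Fa_def by auto
  ultimately show thesis using that[of "map Fa [0..<k]"] unfolding k_def by simp
qed

locale determinantal_code =
  fixes R :: "'a::{finite,field} mat set" and t l m :: nat
  assumes t_pos: "1 \<le> t" and t_less: "t < l" and l_le_m: "l \<le> m" and rep: "is_rep_set R t l m"
begin

lemma wt_codeword_rank_one_lt:
  assumes F: "F \<in> carrier_mat l m" "mrank F = 1" and G: "G \<in> carrier_mat l m" "2 \<le> mrank G"
  shows "wt R (codeword l m R F) < wt R (codeword l m R G)"
proof -
  have "card (tau_nonzero t l m 1 :: 'a mat set) < card (tau_nonzero t l m (mrank G) :: 'a mat set)"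
    using card_tau_nonzero_1_lt[OF t_pos t_less l_le_m G(2) mrank_le_row[OF G(1)]] .
  then have "(card (UNIV :: 'a set) - 1) * wt R (codeword l m R F) < (card (UNIV :: 'a set) - 1) * wt R (codeword l m R G)"
    using wt_codeword[OF rep F(1)] wt_codeword[OF rep G(1)] F(2) by simp
  then show ?thesis by simp
qed

lemma single_entry_mat_00:
  "single_entry_mat l m 0 0 \<in> (tau_nonzero t l m 1 :: 'a mat set)"
  "mrank (single_entry_mat l m 0 0 :: 'a mat) = 1"
proof -
  show rk: "mrank (single_entry_mat l m 0 0 :: 'a mat) = 1"
    using mrank_single_entry_mat[of 0 l 0 m, where 'a='a] t_pos t_less l_le_m by simp
  have "tau 1 (single_entry_mat l m 0 0 :: 'a mat) = 1"
    using t_less l_le_m unfolding tau_def by (simp add: single_entry_mat_def)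
  then show "single_entry_mat l m 0 0 \<in> (tau_nonzero t l m 1 :: 'a mat set)"
    using rk t_pos unfolding tau_nonzero_def by simp
qed

lemma wt_codeword_single_entry_le:
  assumes F: "F \<in> carrier_mat l m" "F \<noteq> 0\<^sub>m l m"
  shows "wt R (codeword l m R (single_entry_mat l m 0 0)) \<le> wt R (codeword l m R F)"
    and "wt R (codeword l m R F) = wt R (codeword l m R (single_entry_mat l m 0 0)) \<longleftrightarrow> mrank F = 1"
proof -
  let ?w = "\<lambda>G. wt R (codeword l m R G)" and ?E = "single_entry_mat l m 0 0 :: 'a mat"
  have "?w ?E \<le> ?w F \<and> (?w F = ?w ?E \<longleftrightarrow> mrank F = 1)"
  proof (cases "mrank F = 1")
    case True
    then show ?thesis
      using wt_codeword_eq_if_mrank_eq[OF rep F(1) single_entry_mat_carrier[of l m 0 0]]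
        single_entry_mat_00(2) by simp
  next
    case False
    then have "2 \<le> mrank F" using mrank_pos_iff[OF F(1)] F(2) by simp
    then show ?thesis
      using wt_codeword_rank_one_lt[OF single_entry_mat_carrier single_entry_mat_00(2) F(1)] by simp
  qed
  then show "?w ?E \<le> ?w F" and "?w F = ?w ?E \<longleftrightarrow> mrank F = 1" by simp_all
qed

lemma wt_codeword_pos:
  assumes F: "F \<in> carrier_mat l m" "F \<noteq> 0\<^sub>m l m"
  shows "0 < wt R (codeword l m R F)"
proof -
  have "finite (tau_nonzero t l m 1 :: 'a mat set)"
    unfolding tau_nonzero_def by (rule finite_subset[OF _ finite_carrier_mat]) blast
  then have "0 < card (tau_nonzero t l m 1 :: 'a mat set)"
    using single_entry_mat_00(1) card_gt_0_iff by blast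
  then have "0 < wt R (codeword l m R (single_entry_mat l m 0 0))"
    using wt_codeword[OF rep single_entry_mat_carrier] single_entry_mat_00(2) by (metis gr0I mult_0_right)
  then show ?thesis using wt_codeword_single_entry_le(1)[OF F] by simp
qed

lemma codeword_eq_zero_iff:
  assumes F: "F \<in> carrier_mat l m"
  shows "codeword l m R F = (\<lambda>_. 0) \<longleftrightarrow> F = 0\<^sub>m l m"
proof
  assume "codeword l m R F = (\<lambda>_. 0)"
  then have "wt R (codeword l m R F) = 0" unfolding wt_def by simp
  then show "F = 0\<^sub>m l m" using wt_codeword_pos[OF F] by (metis less_irrefl)
qed (auto simp: codeword_def)

lemma inj_on_codeword: "inj_on (codeword l m R) (carrier_mat l m)"
proof (rule inj_onI)
  fix F G assume F: "F \<in> carrier_mat l m" and G: "G \<in> carrier_mat l m"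
    and "codeword l m R F = codeword l m R G"
  then have "codeword l m R (F - G) = (\<lambda>_. 0)" using codeword_diff[OF F G] by simp
  moreover have "F - G \<in> carrier_mat l m" using G by (rule minus_carrier_mat)
  ultimately have FG: "F - G = 0\<^sub>m l m" using codeword_eq_zero_iff by blast
  show "F = G"
  proof (rule eq_matI)
    fix i j assume "i < dim_row G" "j < dim_col G"
    then show "F $$ (i,j) = G $$ (i,j)" using arg_cong[OF FG, of "\<lambda>M. M $$ (i,j)"] F G by simp
  qed (use F G in auto)
qed

lemma det_code_eq: "det_code l m R = codeword l m R ` carrier_mat l m"
  unfolding det_code_def by auto

lemma min_dist_det_code:
  "min_dist R (det_code l m R) = wt R (codeword l m R (single_entry_mat l m 0 0))"
proof -
  let ?E = "single_entry_mat l m 0 0 :: 'a mat"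
  let ?S = "{wt R c |c. c \<in> det_code l m R \<and> c \<noteq> (\<lambda>_. 0)}"
  have S: "?S = (\<lambda>F. wt R (codeword l m R F)) ` {F \<in> carrier_mat l m. F \<noteq> 0\<^sub>m l m}"
    unfolding det_code_eq using codeword_eq_zero_iff by blast
  have "?E \<noteq> 0\<^sub>m l m"
    using single_entry_mat_00(2) mrank_pos_iff[of ?E l m] by simp
  then have "wt R (codeword l m R ?E) \<in> ?S" unfolding S by simp
  moreover have "finite ?S" unfolding S using finite_carrier_mat[of l m, where 'a='a] by simp
  moreover have "wt R (codeword l m R ?E) \<le> w" if "w \<in> ?S" for w
    using that wt_codeword_single_entry_le(1) unfolding S by auto
  ultimately show ?thesis unfolding min_dist_def by (intro Min_eqI) auto
qed

lemma min_wt_words_det_code: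
  "min_wt_words R (det_code l m R) = codeword l m R ` {F \<in> carrier_mat l m. mrank F = 1}"
proof safe
  fix c assume "c \<in> min_wt_words R (det_code l m R)"
  then have c0: "c \<in> det_code l m R" "c \<noteq> (\<lambda>_. 0)"
    and w: "wt R c = wt R (codeword l m R (single_entry_mat l m 0 0))"
    unfolding min_wt_words_def min_dist_det_code by simp_all
  then obtain F where F: "F \<in> carrier_mat l m" and "c = codeword l m R F" unfolding det_code_eq by blast
  with c0 have c: "c = codeword l m R F" "c \<noteq> (\<lambda>_. 0)" by simp_all
  have "F \<noteq> 0\<^sub>m l m" using c codeword_eq_zero_iff[OF F] by simp
  then have "mrank F = 1" using wt_codeword_single_entry_le(2)[OF F] w c by simp
  then show "c \<in> codeword l m R ` {F \<in> carrier_mat l m. mrank F = 1}" using F c by blast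
next
  fix F :: "'a mat" assume F: "F \<in> carrier_mat l m" "mrank F = 1"
  then have F0: "F \<noteq> 0\<^sub>m l m" using mrank_pos_iff[OF F(1)] by simp
  have "codeword l m R F \<in> det_code l m R" unfolding det_code_eq using F(1) by blast
  moreover have "codeword l m R F \<noteq> (\<lambda>_. 0)" using codeword_eq_zero_iff[OF F(1)] F0 by simp
  moreover have "wt R (codeword l m R F) = wt R (codeword l m R (single_entry_mat l m 0 0))"
    using wt_codeword_single_entry_le(2)[OF F(1) F0] F(2) by simp
  ultimately show "codeword l m R F \<in> min_wt_words R (det_code l m R)"
    unfolding min_wt_words_def min_dist_det_code by simp
qed

lemma card_min_wt_words: "card (min_wt_words R (det_code l m R)) = mu TYPE('a) 1 l m"
proof -
  have "inj_on (codeword l m R) {F \<in> carrier_mat l m. mrank F = 1}"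
    by (rule inj_on_subset[OF inj_on_codeword]) blast
  then show ?thesis unfolding min_wt_words_det_code mu_def by (rule card_image)
qed

lemma lin_span_min_wt_words: "lin_span (min_wt_words R (det_code l m R)) = det_code l m R"
proof
  show "lin_span (min_wt_words R (det_code l m R)) \<subseteq> det_code l m R"
  proof
    fix x assume "x \<in> lin_span (min_wt_words R (det_code l m R))"
    then obtain S a where x: "x = (\<lambda>y. \<Sum>w\<in>S. a w * w y)" and S: "S \<subseteq> min_wt_words R (det_code l m R)"
      unfolding lin_span_def by blast
    have "\<forall>w\<in>S. \<exists>F. F \<in> carrier_mat l m \<and> w = codeword l m R F"
      using S unfolding min_wt_words_det_code by blast
    then obtain F where F: "\<And>w. w \<in> S \<Longrightarrow> F w \<in> carrier_mat l m \<and> w = codeword l m R (F w)"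
      by metis
    have "x = codeword l m R (mat l m (\<lambda>ij. \<Sum>w\<in>S. a w * F w $$ ij))"
      unfolding codeword_lincomb x using F by (intro ext sum.cong refl) metis
    then show "x \<in> det_code l m R" unfolding det_code_eq by simp
  qed
  show "det_code l m R \<subseteq> lin_span (min_wt_words R (det_code l m R))"
  proof
    fix c assume "c \<in> det_code l m R"
    then obtain F where F: "F \<in> carrier_mat l m" and c: "c = codeword l m R F" unfolding det_code_eq by blast
    let ?I = "{..<l} \<times> {..<m}" and ?E = "\<lambda>p. single_entry_mat l m (fst p) (snd p) :: 'a mat"
    have "c = codeword l m R (mat l m (\<lambda>ij. \<Sum>p\<in>?I. F $$ p * ?E p $$ ij))"
      unfolding c using mat_eq_sum_single_entry[OF F] by (rule arg_cong)
    then have "c = (\<lambda>N. \<Sum>p\<in>?I. F $$ p * codeword l m R (?E p) N)" unfolding codeword_lincomb .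
    moreover have "(\<lambda>p. codeword l m R (?E p)) ` ?I \<subseteq> min_wt_words R (det_code l m R)"
      unfolding min_wt_words_det_code using mrank_single_entry_mat by fastforce
    ultimately show "c \<in> lin_span (min_wt_words R (det_code l m R))"
      using lin_span_sum_mem[of ?I] by simp
  qed
qed

lemma det_code_sum_min_wt_words:
  assumes "c \<in> det_code l m R"
  shows "\<exists>cs. set cs \<subseteq> min_wt_words R (det_code l m R) \<and> length cs \<le> l \<and> c = (\<lambda>N. \<Sum>w\<leftarrow>cs. w N)"
proof -
  obtain F where F: "F \<in> carrier_mat l m" and c: "c = codeword l m R F"
    using assms unfolding det_code_eq by blast
  obtain Fs where len: "length Fs = mrank F" and Fs: "\<And>G. G \<in> set Fs \<Longrightarrow> G \<in> carrier_mat l m \<and> mrank G \<le> 1"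
    and cF: "c = (\<lambda>N. \<Sum>G\<leftarrow>Fs. codeword l m R G N)"
    using codeword_eq_sum_rank_le_one[OF F] unfolding c by blast
  define cs where "cs = filter (\<lambda>w. w \<noteq> (\<lambda>_. 0)) (map (codeword l m R) Fs)"
  have "set cs \<subseteq> min_wt_words R (det_code l m R)"
  proof
    fix w assume "w \<in> set cs"
    then obtain G where G: "G \<in> set Fs" "w = codeword l m R G" "w \<noteq> (\<lambda>_. 0)" unfolding cs_def by auto
    have Gc: "G \<in> carrier_mat l m" "mrank G \<le> 1" using Fs[OF G(1)] by auto
    have "G \<noteq> 0\<^sub>m l m" using G(2,3) codeword_eq_zero_iff[OF Gc(1)] by auto
    then have "mrank G = 1" using mrank_pos_iff[OF Gc(1)] Gc(2) by simp
    then show "w \<in> min_wt_words R (det_code l m R)" unfolding min_wt_words_det_code using Fs G by blast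
  qed
  moreover have "length cs \<le> l"
  proof -
    have "length cs \<le> length (map (codeword l m R) Fs)" unfolding cs_def by (rule length_filter_le)
    then show ?thesis using len mrank_le_row[OF F] by simp
  qed
  moreover have "(\<Sum>w\<leftarrow>cs. w N) = c N" for N
  proof -
    have "(\<Sum>w\<leftarrow>cs. w N) = (\<Sum>w\<leftarrow>map (codeword l m R) Fs. w N)"
      unfolding cs_def by (rule sum_list_map_filter) simp
    then show ?thesis unfolding cF by (simp add: o_def)
  qed
  ultimately show ?thesis by auto
qed

end

lemma what_eq_card_tau_nonzero:
  "what TYPE('a::{finite,field}) r t l m = real (card (tau_nonzero t l m r :: 'a mat set)) / real (card (UNIV :: 'a set) - 1)"
  unfolding what_def tau_nonzero_def ..

theorem mainTheorem7:
  fixes R :: "'a::{finite,field} mat set"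
    and t l m :: nat
  assumes "1 \<le> t" and "t < l" and "l \<le> m"
    and "is_rep_set R t l m"
  shows "(\<forall>r. 2 \<le> r \<and> r \<le> l \<longrightarrow> what TYPE('a) 1 t l m < what TYPE('a) r t l m)
    \<and> card (min_wt_words R (det_code l m R)) = mu TYPE('a) 1 l m
    \<and> lin_span (min_wt_words R (det_code l m R)) = det_code l m R
    \<and> (\<forall>c \<in> det_code l m R. \<exists>cs. set cs \<subseteq> min_wt_words R (det_code l m R) \<and> length cs \<le> l
          \<and> c = (\<lambda>N. \<Sum>w\<leftarrow>cs. w N))"
proof -
  interpret determinantal_code R t l m using assms by unfold_locales
  have "what TYPE('a) 1 t l m < what TYPE('a) r t l m" if "2 \<le> r" "r \<le> l" for r
    using card_tau_nonzero_1_lt[OF assms(1-3) that, where 'a='a] card_field_gt_1[where 'a='a]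
    unfolding what_eq_card_tau_nonzero by (simp add: divide_strict_right_mono)
  then show ?thesis using card_min_wt_words lin_span_min_wt_words det_code_sum_min_wt_words by blast
qed

end
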